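(* Let $\mathcal{G}=(\mathcal{V},\mathcal{E})$ be connected, $c\in\mathbb{R}^n$, $\bar c=\frac1n\sum_ic_i$. Set $x^0=c$ and for $t\ge0$ let $\lambda^t=\frac1{2m}\sum_{(i,j)\in\mathcal{E}}|x_i^t-x_j^t|$; choose $e=(i,j)\in\mathcal{E}$ uniformly at random (independently across iterations); if $x_i^t<x_j^t$ set $x_i^{t+1}=x_i^t+\lambda^t$, $x_j^{t+1}=x_j^t-\lambda^t$; otherwise set $x_i^{t+1}=x_i^t-\lambda^t$, $x_j^{t+1}=x_j^t+\lambda^t$; all other coordinates are unchanged. Then for all $k\ge0$ $$\mathbb{E}\big[\|\bar c\mathbf{1}-x^k\|^2\big]\le\Big(1-\frac{\alpha(\mathcal{G})}{2m^2}\Big)^k\|\bar c\mathbf{1}-x^0\|^2 .$$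
   Context: $\mathcal{G}$ is an undirected graph with vertices $\mathcal{V}=\{1,\dots,n\}$ and $m=|\mathcal{E}|$ edges, each edge $e=(i,j)$ having an arbitrary but fixed orientation. The Laplacian is $\mathbf{L}=\mathbf{A}^\top\mathbf{A}$, where $\mathbf{A}\in\mathbb{R}^{m\times n}$ has for edge $(i,j)$ a row with $1$ in column $i$, $-1$ in column $j$, zeros elsewhere; $\alpha(\mathcal{G})$ is the second smallest eigenvalue of $\mathbf{L}$. $\mathbf{1}$ is the all-ones vector and $\|\cdot\|$ the Euclidean norm. *)

theory Defs
  imports "Jordan_Normal_Form.Char_Poly" "HOL-Probability.Probability_Mass_Function"
begin

text \<open>Graph on vertices {0..<n}; edges given as a list Es of oriented pairs (i,j)
  (the fixed orientation of each undirected edge); m = length Es.\<close>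

definition simple_graph :: "nat \<Rightarrow> (nat \<times> nat) list \<Rightarrow> bool" where
  "simple_graph n Es \<longleftrightarrow> distinct Es \<and>
     (\<forall>(i,j)\<in>set Es. i < n \<and> j < n \<and> i \<noteq> j \<and> (j,i) \<notin> set Es)"

definition graph_connected :: "nat \<Rightarrow> (nat \<times> nat) list \<Rightarrow> bool" where
  "graph_connected n Es \<longleftrightarrow>
     (\<forall>i<n. \<forall>j<n. (i,j) \<in> (set Es \<union> (set Es)\<inverse>)\<^sup>*)"

definition incidence_mat :: "nat \<Rightarrow> (nat \<times> nat) list \<Rightarrow> real Matrix.mat" where
  "incidence_mat n Es = Matrix.mat (length Es) n
     (\<lambda>(r,k). if k = fst (Es ! r) then 1 else if k = snd (Es ! r) then -1 else 0)"

definition laplacian :: "nat \<Rightarrow> (nat \<times> nat) list \<Rightarrow> real Matrix.mat" where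
  "laplacian n Es = transpose_mat (incidence_mat n Es) * incidence_mat n Es"

text \<open>Second smallest eigenvalue of L (eigenvalues counted with algebraic multiplicity).\<close>
definition alg_conn :: "nat \<Rightarrow> (nat \<times> nat) list \<Rightarrow> real" where
  "alg_conn n Es = sorted_list_of_multiset (proots (char_poly (laplacian n Es))) ! 1"

definition step_size :: "(nat \<times> nat) list \<Rightarrow> (nat \<Rightarrow> real) \<Rightarrow> real" where
  "step_size Es x = (1 / (2 * real (length Es))) * (\<Sum>(i,j)\<leftarrow>Es. \<bar>x i - x j\<bar>)"

definition upd :: "(nat \<times> nat) list \<Rightarrow> (nat \<Rightarrow> real) \<Rightarrow> nat \<times> nat \<Rightarrow> (nat \<Rightarrow> real)" where
  "upd Es x e = (let (i,j) = e; l = step_size Es x in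
     if x i < x j then x(i := x i + l, j := x j - l) else x(i := x i - l, j := x j + l))"

primrec iterate :: "(nat \<times> nat) list \<Rightarrow> (nat \<Rightarrow> real) \<Rightarrow> nat \<Rightarrow> (nat \<Rightarrow> real) pmf" where
  "iterate Es c 0 = return_pmf c"
| "iterate Es c (Suc t) = iterate Es c t \<bind> (\<lambda>x. map_pmf (upd Es x) (pmf_of_set (set Es)))"

end

theory Submission
  imports Defs
begin

(* Each step moves lambda from the larger to the smaller endpoint of the chosen edge: the mean c-bar
   is preserved and the squared distance |c-bar 1 - x|^2 drops by 2 lambda |x_i - x_j| - 2 lambda^2.
   Since the gaps |x_i - x_j| over all m edges sum to 2 m lambda, the expected drop is exactly
   2 lambda^2. On the other hand (sum of gaps)^2 >= sum of squared gaps = y^T L y >= alpha |y|^2 for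
   y = x - c-bar 1, which is orthogonal to the kernel vector 1 of L (Courant-Fischer, via the
   spectral theorem). Hence 2 lambda^2 >= alpha/(2 m^2) |c-bar 1 - x|^2, i.e. every step
   contracts the expected squared distance by the factor 1 - alpha/(2 m^2). *)

no_notation Finite_Cartesian_Product.vec.vec_nth (infixl "$" 90)
no_notation Inner_Product.real_inner_class.inner (infix "\<bullet>" 70)

section \<open>Spectral theorem for real symmetric matrices\<close>

lemma real_symmetric_eigenvalue_real:
  fixes S :: "real mat"
  assumes S: "S \<in> carrier_mat n n" and sym: "transpose_mat S = S"
    and ev: "eigenvector (map_mat complex_of_real S) w a"
  shows "Im a = 0"
proof -
  have w: "w \<in> carrier_vec n" and w0: "w \<noteq> 0\<^sub>v n"
    and eq: "map_mat complex_of_real S *\<^sub>v w = a \<cdot>\<^sub>v w"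
    using ev S unfolding eigenvector_def by auto
  have Sij: "S $$ (i,j) = S $$ (j,i)" if "i < n" "j < n" for i j
    using sym that S by (metis carrier_matD index_transpose_mat(1))
  define z where "z = (\<Sum>i<n. cnj (w $ i) * (\<Sum>j<n. complex_of_real (S $$ (i,j)) * w $ j))"
  define N where "N = (\<Sum>i<n. cnj (w $ i) * w $ i)"
  \<comment> \<open>the Hermitian form \<open>z = w\<^sup>* S w\<close> is real and equals \<open>a \<cdot> w\<^sup>* w\<close>\<close>
  have "z = (\<Sum>i<n. cnj (w $ i) * (a * w $ i))"
  proof -
    have "(\<Sum>j<n. complex_of_real (S $$ (i,j)) * w $ j) = a * w $ i" if "i < n" for i
      using arg_cong[OF eq, of "\<lambda>v. v $ i"] that S w
      by (simp add: scalar_prod_def lessThan_atLeast0)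
    thus ?thesis unfolding z_def by (intro sum.cong) auto
  qed
  hence zN: "z = a * N" unfolding N_def by (simp add: sum_distrib_left algebra_simps)
  have "cnj z = (\<Sum>i<n. \<Sum>j<n. w $ i * complex_of_real (S $$ (i,j)) * cnj (w $ j))"
    unfolding z_def by (simp add: cnj_sum sum_distrib_left mult.assoc)
  also have "\<dots> = (\<Sum>j<n. \<Sum>i<n. w $ i * complex_of_real (S $$ (i,j)) * cnj (w $ j))"
    by (rule sum.swap)
  also have "\<dots> = z" unfolding z_def by (auto simp: sum_distrib_left Sij intro!: sum.cong)
  finally have cz: "cnj z = z" .
  obtain i where i: "i < n" "w $ i \<noteq> 0"
    using w0 w by (metis carrier_vecD eq_vecI index_zero_vec(1,2))
  have "Re N = (\<Sum>i<n. (cmod (w $ i))\<^sup>2)"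
    unfolding N_def by (simp add: Re_sum cmod_def power2_eq_square)
  also have "\<dots> > 0" by (rule sum_pos2[where i=i]) (use i in auto)
  finally have "Re N > 0" .
  moreover have "Im N = 0" unfolding N_def by (simp add: Im_sum)
  ultimately have "cnj N = N" "N \<noteq> 0" by (auto simp: complex_eq_iff)
  with cz zN have "cnj a = a" by simp
  thus ?thesis by (metis Reals_cnj_iff complex_is_Real_iff)
qed

lemma real_symmetric_has_unit_eigenvector:
  fixes S :: "real mat"
  assumes S: "S \<in> carrier_mat n n" and sym: "transpose_mat S = S" and n: "n > 0"
  shows "\<exists>\<mu> u. u \<in> carrier_vec n \<and> u \<bullet> u = 1 \<and> S *\<^sub>v u = \<mu> \<cdot>\<^sub>v u"
proof -
  let ?Sc = "map_mat complex_of_real S"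
  have Sc: "?Sc \<in> carrier_mat n n" using S by simp
  obtain as where cp: "char_poly ?Sc = (\<Prod>a\<leftarrow>as. [:- a, 1:])" and "length as = n"
    using char_poly_factorized[OF Sc] by blast
  with n obtain a as' where "as = a # as'" by (cases as) auto
  hence root: "poly (char_poly ?Sc) a = 0" unfolding cp by simp
  then obtain w where "eigenvector ?Sc w a"
    using eigenvalue_root_char_poly[OF Sc] unfolding eigenvalue_def by blast
  hence "a = complex_of_real (Re a)"
    using real_symmetric_eigenvalue_real[OF S sym] by (simp add: complex_eq_iff)
  with root have "complex_of_real (poly (char_poly S) (Re a)) = 0"
    by (metis of_real_hom.char_poly_hom[OF S] of_real_hom.poly_map_poly)
  hence "eigenvalue S (Re a)" using eigenvalue_root_char_poly[OF S] by simp
  then obtain v where "eigenvector S v (Re a)" unfolding eigenvalue_def by blast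
  hence v: "v \<in> carrier_vec n" "v \<noteq> 0\<^sub>v n" and Sv: "S *\<^sub>v v = Re a \<cdot>\<^sub>v v"
    unfolding eigenvector_def using S by auto
  have vv: "v \<bullet> v > 0" using conjugate_square_greater_0_vec[OF v(1)] v(2) by simp
  define u where "u = (1 / sqrt (v \<bullet> v)) \<cdot>\<^sub>v v"
  have "u \<in> carrier_vec n" unfolding u_def using v by simp
  moreover have "u \<bullet> u = 1"
    unfolding u_def using v vv
    by (simp add: smult_scalar_prod_distrib scalar_prod_smult_distrib real_sqrt_mult[symmetric])
  moreover have "S *\<^sub>v u = Re a \<cdot>\<^sub>v u"
    unfolding u_def using S v by (simp add: mult_mat_vec Sv smult_smult_assoc mult.commute)
  ultimately show ?thesis by blast
qed


definition reflection_mat :: "nat \<Rightarrow> real \<Rightarrow> (nat \<Rightarrow> real) \<Rightarrow> real mat" where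
  "reflection_mat N c w = Matrix.mat N N (\<lambda>(i,j). (if i = j then 1 else 0) - c * (w i * w j))"

lemma reflection_mat_carrier: "reflection_mat N c w \<in> carrier_mat N N"
  by (simp add: reflection_mat_def)

lemma reflection_mat_symmetric: "transpose_mat (reflection_mat N c w) = reflection_mat N c w"
  by (intro eq_matI) (auto simp: reflection_mat_def)

lemma if_one_zero_mult:
  "(if P then 1 else 0) * x = (if P then x else 0)"
  "x * (if P then 1 else 0) = (if P then x else 0)"
  "y * (if P then x else 0) = (if P then y * x else (0 :: 'a :: semiring_1))"
  by simp_all

lemma reflection_mat_mult_vec_index:
  assumes "u \<in> carrier_vec N" "i < N"
  shows "(reflection_mat N c w *\<^sub>v u) $ i = u $ i - c * (\<Sum>k = 0..<N. w k * u $ k) * w i"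
  using assms
  by (simp add: reflection_mat_def scalar_prod_def algebra_simps sum_subtractf sum_distrib_left
      if_one_zero_mult)

lemma reflection_mat_involution:
  assumes "c * c * (\<Sum>k = 0..<N. w k * w k) = 2 * c"
  shows "reflection_mat N c w * reflection_mat N c w = 1\<^sub>m N"
proof (rule eq_matI)
  fix i j assume "i < dim_row (1\<^sub>m N)" "j < dim_col (1\<^sub>m N)"
  hence ij: "i < N" "j < N" by auto
  have "(reflection_mat N c w * reflection_mat N c w) $$ (i,j)
      = (\<Sum>k = 0..<N. ((if i = k then 1 else 0) - c * (w i * w k))
                      * ((if k = j then 1 else 0) - c * (w k * w j)))"
    using ij by (simp add: reflection_mat_def scalar_prod_def)
  also have "\<dots> = (if i = j then 1 else 0) - 2 * c * w i * w j
      + c * c * (\<Sum>k = 0..<N. w k * w k) * w i * w j"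
    using ij by (simp add: algebra_simps sum_subtractf sum.distrib sum_distrib_left if_one_zero_mult)
  also have "\<dots> = (if i = j then 1 else 0)" using assms by simp
  finally show "(reflection_mat N c w * reflection_mat N c w) $$ (i,j) = 1\<^sub>m N $$ (i,j)"
    using ij by simp
qed (auto simp: reflection_mat_def)

lemma householder_reflection:
  fixes u :: "real Matrix.vec"
  assumes u: "u \<in> carrier_vec N" and uu: "u \<bullet> u = 1" and N: "N > 0"
  shows "\<exists>H. H \<in> carrier_mat N N \<and> transpose_mat H = H \<and> H * H = 1\<^sub>m N
           \<and> H *\<^sub>v u = unit_vec N 0"
proof (cases "u = unit_vec N 0")
  case True
  thus ?thesis by (intro exI[of _ "1\<^sub>m N"]) (use u in auto)
next
  case False
  \<comment> \<open>reflect in the hyperplane orthogonal to \<open>w = u - e\<^sub>0\<close>\<close>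
  define w where "w = (\<lambda>i. u $ i - (if i = 0 then 1 else 0::real))"
  define t where "t = (\<Sum>k = 0..<N. w k * u $ k)"
  have uu': "(\<Sum>k = 0..<N. u $ k * u $ k) = 1" using uu u by (simp add: scalar_prod_def)
  have t: "t = 1 - u $ 0"
    unfolding t_def w_def using N by (simp add: algebra_simps sum_subtractf uu' if_one_zero_mult)
  have s: "(\<Sum>k = 0..<N. w k * w k) = 2 * t"
    unfolding t w_def using N
    by (simp add: algebra_simps sum_subtractf sum.distrib uu' if_one_zero_mult)
  have "\<exists>i<N. w i \<noteq> 0"
  proof (rule ccontr)
    assume "\<not> ?thesis"
    hence "u = unit_vec N 0" using u by (intro eq_vecI) (auto simp: w_def unit_vec_def)
    with False show False by simp
  qed
  then obtain i where i: "i < N" "w i \<noteq> 0" by blast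
  have "(\<Sum>k = 0..<N. w k * w k) > 0"
    by (rule sum_pos2[where i=i]) (use i in \<open>auto simp: zero_less_mult_iff linorder_neq_iff\<close>)
  hence t_pos: "t > 0" using s by simp
  define H where "H = reflection_mat N (1 / t) w"
  have "(H *\<^sub>v u) $ k = u $ k - w k" if "k < N" for k
    unfolding H_def reflection_mat_mult_vec_index[OF u that] t_def[symmetric] using t_pos by simp
  hence "H *\<^sub>v u = unit_vec N 0"
    using u by (intro eq_vecI) (auto simp: H_def reflection_mat_def w_def unit_vec_def)
  moreover have "H * H = 1\<^sub>m N"
    unfolding H_def using s t_pos by (intro reflection_mat_involution) (simp add: field_simps)
  ultimately show ?thesis
    using reflection_mat_carrier reflection_mat_symmetric unfolding H_def by blast
qed

lemma transpose_conj_symmetric: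
  fixes H S :: "'a :: comm_semiring_0 mat"
  assumes H: "H \<in> carrier_mat n n" and S: "S \<in> carrier_mat n n"
    and HT: "transpose_mat H = H" and ST: "transpose_mat S = S"
  shows "transpose_mat (H * S * H) = H * S * H"
proof -
  have "transpose_mat (H * S * H) = transpose_mat H * transpose_mat (H * S)"
    by (rule transpose_mult[of _ n n]) (use H S in auto)
  also have "\<dots> = H * (S * H)" using transpose_mult[of H n n S n] H S HT ST by simp
  also have "\<dots> = H * S * H" using H S by (simp add: assoc_mult_mat[of _ n n _ n _ n])
  finally show ?thesis .
qed

lemma symmetric_block_of_eigenvector_unit_vec_0:
  fixes A :: "'a :: comm_ring_1 mat"
  assumes A: "A \<in> carrier_mat (Suc n) (Suc n)" and AT: "transpose_mat A = A"
    and Ae: "A *\<^sub>v unit_vec (Suc n) 0 = \<mu> \<cdot>\<^sub>v unit_vec (Suc n) 0"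
  shows "A = four_block_mat (Matrix.mat 1 1 (\<lambda>_. \<mu>)) (0\<^sub>m 1 n) (0\<^sub>m n 1)
               (Matrix.mat n n (\<lambda>(i,j). A $$ (Suc i, Suc j)))"
    (is "A = ?B")
proof (rule eq_matI)
  have col0: "A $$ (i, 0) = (if i = 0 then \<mu> else 0)" if "i < Suc n" for i
  proof -
    have "A $$ (i, 0) = (A *\<^sub>v unit_vec (Suc n) 0) $ i"
      using that A by (simp add: scalar_prod_right_unit)
    thus ?thesis using Ae that by (simp add: unit_vec_def)
  qed
  have sym: "A $$ (i, j) = A $$ (j, i)" if "i < Suc n" "j < Suc n" for i j
    using AT that A by (metis carrier_matD index_transpose_mat(1))
  fix i j assume "i < dim_row ?B" "j < dim_col ?B"
  hence ij: "i < Suc n" "j < Suc n" by auto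
  show "A $$ (i, j) = ?B $$ (i, j)"
  proof (cases "i = 0 \<or> j = 0")
    case True
    thus ?thesis using ij col0 sym[of i j] by auto
  next
    case False
    then obtain i' j' where "i = Suc i'" "j = Suc j'" by (metis not0_implies_Suc)
    thus ?thesis using ij by auto
  qed
qed (use A in auto)

lemma mat_diag_Suc_block:
  "mat_diag (Suc n) (case_nat \<mu> d)
     = four_block_mat (Matrix.mat 1 1 (\<lambda>_. \<mu>)) (0\<^sub>m 1 n) (0\<^sub>m n 1) (mat_diag n d)"
proof (rule eq_matI)
  fix i j assume "i < dim_row (four_block_mat (Matrix.mat 1 1 (\<lambda>_. \<mu>)) (0\<^sub>m 1 n) (0\<^sub>m n 1) (mat_diag n d))"
    "j < dim_col (four_block_mat (Matrix.mat 1 1 (\<lambda>_. \<mu>)) (0\<^sub>m 1 n) (0\<^sub>m n 1) (mat_diag n d))"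
  thus "mat_diag (Suc n) (case_nat \<mu> d) $$ (i, j)
    = four_block_mat (Matrix.mat 1 1 (\<lambda>_. \<mu>)) (0\<^sub>m 1 n) (0\<^sub>m n 1) (mat_diag n d) $$ (i, j)"
    by (cases i; cases j) (auto simp: mat_diag_def)
qed (auto simp: mat_diag_def)

lemma orthogonal_block_conj:
  fixes Q :: "real mat"
  assumes Q: "Q \<in> carrier_mat n n" and QQ: "transpose_mat Q * Q = 1\<^sub>m n"
  defines "B \<equiv> four_block_mat (1\<^sub>m 1) (0\<^sub>m 1 n) (0\<^sub>m n 1) Q"
  shows "B \<in> carrier_mat (Suc n) (Suc n)" and "transpose_mat B * B = 1\<^sub>m (Suc n)"
    and "B * mat_diag (Suc n) (case_nat \<mu> d) * transpose_mat B
           = four_block_mat (Matrix.mat 1 1 (\<lambda>_. \<mu>)) (0\<^sub>m 1 n) (0\<^sub>m n 1)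
               (Q * mat_diag n d * transpose_mat Q)"
proof -
  let ?M = "Matrix.mat 1 1 (\<lambda>_. \<mu>) :: real mat"
  have D: "mat_diag n d \<in> carrier_mat n n" by simp
  have BT: "transpose_mat B = four_block_mat (1\<^sub>m 1) (0\<^sub>m 1 n) (0\<^sub>m n 1) (transpose_mat Q)"
    unfolding B_def using Q by (subst transpose_four_block_mat) auto
  show "B \<in> carrier_mat (Suc n) (Suc n)" unfolding B_def using Q by auto
  show "transpose_mat B * B = 1\<^sub>m (Suc n)"
    unfolding BT unfolding B_def using Q QQ
    by (subst mult_four_block_mat[of _ 1 1 _ n _ n _ _ 1 _ n]) auto
  have "B * mat_diag (Suc n) (case_nat \<mu> d)
          = four_block_mat ?M (0\<^sub>m 1 n) (0\<^sub>m n 1) (Q * mat_diag n d)"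
    unfolding B_def mat_diag_Suc_block using Q left_mult_zero_mat[OF D]
    by (subst mult_four_block_mat[of _ 1 1 _ n _ n _ _ 1 _ n]) auto
  also have "\<dots> * transpose_mat B
          = four_block_mat ?M (0\<^sub>m 1 n) (0\<^sub>m n 1) (Q * mat_diag n d * transpose_mat Q)"
    unfolding BT using Q mult_carrier_mat[OF Q D]
      mult_carrier_mat[OF mult_carrier_mat[OF Q D] transpose_carrier_mat[THEN iffD2, OF Q]]
      right_mult_zero_mat[OF mult_carrier_mat[OF Q D]]
    by (subst mult_four_block_mat[of _ 1 1 _ n _ n _ _ 1 _ n]) auto
  finally show "B * mat_diag (Suc n) (case_nat \<mu> d) * transpose_mat B
          = four_block_mat ?M (0\<^sub>m 1 n) (0\<^sub>m n 1) (Q * mat_diag n d * transpose_mat Q)" .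
qed

lemma real_symmetric_deflation:
  fixes S :: "real mat"
  assumes S: "S \<in> carrier_mat (Suc n) (Suc n)" and ST: "transpose_mat S = S"
  shows "\<exists>H \<mu> A'. H \<in> carrier_mat (Suc n) (Suc n) \<and> transpose_mat H = H \<and> H * H = 1\<^sub>m (Suc n)
           \<and> A' \<in> carrier_mat n n \<and> transpose_mat A' = A'
           \<and> H * S * H = four_block_mat (Matrix.mat 1 1 (\<lambda>_. \<mu>)) (0\<^sub>m 1 n) (0\<^sub>m n 1) A'"
proof -
  let ?N = "Suc n" and ?e = "unit_vec (Suc n) 0"
  obtain \<mu> u where u: "u \<in> carrier_vec ?N" "u \<bullet> u = 1" and Su: "S *\<^sub>v u = \<mu> \<cdot>\<^sub>v u"
    using real_symmetric_has_unit_eigenvector[OF S ST] by blast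
  obtain H where H: "H \<in> carrier_mat ?N ?N" and HT: "transpose_mat H = H"
    and HH: "H * H = 1\<^sub>m ?N" and Hu: "H *\<^sub>v u = ?e"
    using householder_reflection[OF u] by auto
  define A where "A = H * S * H"
  have A: "A \<in> carrier_mat ?N ?N" unfolding A_def using H S by simp
  have "H *\<^sub>v ?e = (H * H) *\<^sub>v u"
    using H u by (simp flip: Hu add: assoc_mult_mat_vec[of _ ?N ?N _ ?N])
  hence He: "H *\<^sub>v ?e = u" using HH u by simp
  have "A *\<^sub>v ?e = H *\<^sub>v (S *\<^sub>v (H *\<^sub>v ?e))"
    unfolding A_def using H S by (simp add: assoc_mult_mat_vec[of _ ?N ?N _ ?N])
  also have "\<dots> = \<mu> \<cdot>\<^sub>v ?e" using He Su H u Hu by (simp add: mult_mat_vec)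
  finally have Ae: "A *\<^sub>v ?e = \<mu> \<cdot>\<^sub>v ?e" .
  define A' where "A' = Matrix.mat n n (\<lambda>(i,j). A $$ (Suc i, Suc j))"
  have AT: "transpose_mat A = A"
    unfolding A_def by (rule transpose_conj_symmetric[OF H S HT ST])
  have "A $$ (i, j) = A $$ (j, i)" if "i < ?N" "j < ?N" for i j
    using AT that A by (metis carrier_matD index_transpose_mat(1))
  hence "transpose_mat A' = A'" unfolding A'_def by (intro eq_matI) auto
  moreover have "A = four_block_mat (Matrix.mat 1 1 (\<lambda>_. \<mu>)) (0\<^sub>m 1 n) (0\<^sub>m n 1) A'"
    unfolding A'_def by (rule symmetric_block_of_eigenvector_unit_vec_0[OF A AT Ae])
  moreover have "A' \<in> carrier_mat n n" unfolding A'_def by simp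
  ultimately show ?thesis using H HT HH unfolding A_def by blast
qed

theorem real_symmetric_spectral:
  fixes S :: "real mat"
  assumes "S \<in> carrier_mat n n" "transpose_mat S = S"
  shows "\<exists>Q d. Q \<in> carrier_mat n n \<and> transpose_mat Q * Q = 1\<^sub>m n
           \<and> S = Q * mat_diag n d * transpose_mat Q"
  using assms
proof (induction n arbitrary: S)
  case 0
  thus ?case by (intro exI[of _ "1\<^sub>m 0"]) (auto intro!: eq_matI)
next
  case (Suc n)
  let ?N = "Suc n"
  have S: "S \<in> carrier_mat ?N ?N" by fact
  obtain H \<mu> A' where H: "H \<in> carrier_mat ?N ?N" and HT: "transpose_mat H = H"
    and HH: "H * H = 1\<^sub>m ?N" and A': "A' \<in> carrier_mat n n" "transpose_mat A' = A'"
    and HSH: "H * S * H = four_block_mat (Matrix.mat 1 1 (\<lambda>_. \<mu>)) (0\<^sub>m 1 n) (0\<^sub>m n 1) A'"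
    using real_symmetric_deflation[OF S Suc.prems(2)] by blast
  obtain Q' d where Q': "Q' \<in> carrier_mat n n" and Q'Q': "transpose_mat Q' * Q' = 1\<^sub>m n"
    and A'_eq: "A' = Q' * mat_diag n d * transpose_mat Q'"
    using Suc.IH[OF A'] by blast
  define B where "B = four_block_mat (1\<^sub>m 1) (0\<^sub>m 1 n) (0\<^sub>m n 1) Q'"
  note B = orthogonal_block_conj[OF Q' Q'Q', folded B_def]
  define Q where "Q = H * B"
  have Q: "Q \<in> carrier_mat ?N ?N" unfolding Q_def using H B by simp
  have QT: "transpose_mat Q = transpose_mat B * H"
    unfolding Q_def using H B by (simp add: transpose_mult HT)
  have BT: "transpose_mat B \<in> carrier_mat ?N ?N" using B by simp
  have D: "mat_diag ?N (case_nat \<mu> d) \<in> carrier_mat ?N ?N" by simp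
  have "transpose_mat Q * Q = transpose_mat B * (H * H) * B"
    unfolding QT unfolding Q_def using H B BT by (simp add: assoc_mult_mat[of _ ?N ?N _ ?N _ ?N])
  hence "transpose_mat Q * Q = 1\<^sub>m ?N" using HH B BT by simp
  moreover have "Q * mat_diag ?N (case_nat \<mu> d) * transpose_mat Q
      = H * (B * mat_diag ?N (case_nat \<mu> d) * transpose_mat B) * H"
    unfolding QT unfolding Q_def using H B(1) BT D mult_carrier_mat[OF D BT]
    by (simp add: assoc_mult_mat[of _ ?N ?N _ ?N _ ?N])
  hence "Q * mat_diag ?N (case_nat \<mu> d) * transpose_mat Q = (H * H) * S * (H * H)"
    unfolding B(3) A'_eq[symmetric] HSH[symmetric] using H S
    by (simp add: assoc_mult_mat[of _ ?N ?N _ ?N _ ?N])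
  ultimately show ?case using Q HH S by auto
qed

section \<open>The second smallest eigenvalue and the Rayleigh quotient\<close>

lemma orthogonal_mult_transpose:
  fixes Q :: "'a :: field mat"
  assumes Q: "Q \<in> carrier_mat n n" and QQ: "transpose_mat Q * Q = 1\<^sub>m n"
  shows "Q * transpose_mat Q = 1\<^sub>m n"
  using mat_mult_left_right_inverse[OF _ Q QQ] Q by simp

lemma proots_prod_list_linear_factors:
  "proots (\<Prod>a\<leftarrow>ds. [:- a, 1:]) = mset (ds :: 'a :: idom list)"
proof (induction ds)
  case (Cons a ds)
  have "(\<Prod>a\<leftarrow>ds. [:- a, 1:]) \<noteq> 0" by (auto simp: prod_list_zero_iff)
  hence "proots ([:- a, 1:] * (\<Prod>a\<leftarrow>ds. [:- a, 1:]))
      = proots [:- a, 1:] + proots (\<Prod>a\<leftarrow>ds. [:- a, 1:])"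
    by (intro proots_mult) auto
  also have "proots [:- a, 1:] = {#a#}" using proots_linear_factor[of "-a"] by simp
  finally show ?case using Cons by simp
qed simp

lemma char_poly_orthogonal_diag:
  fixes Q :: "'a :: field mat"
  assumes Q: "Q \<in> carrier_mat n n" and QQ: "transpose_mat Q * Q = 1\<^sub>m n"
  shows "char_poly (Q * mat_diag n d * transpose_mat Q) = (\<Prod>a\<leftarrow>map d [0..<n]. [:- a, 1:])"
proof -
  have D: "mat_diag n d \<in> carrier_mat n n" by simp
  have "similar_mat_wit (Q * mat_diag n d * transpose_mat Q) (mat_diag n d) Q (transpose_mat Q)"
    unfolding similar_mat_wit_def Let_def
    using Q D QQ orthogonal_mult_transpose[OF Q QQ] by auto
  hence "char_poly (Q * mat_diag n d * transpose_mat Q) = char_poly (mat_diag n d)"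
    by (intro char_poly_similar) (auto simp: similar_mat_def)
  also have "\<dots> = (\<Prod>a\<leftarrow>diag_mat (mat_diag n d). [:- a, 1:])"
    by (rule char_poly_upper_triangular[OF D]) (auto simp: upper_triangular_def mat_diag_def)
  also have "diag_mat (mat_diag n d) = map d [0..<n]"
    by (rule nth_equalityI) (auto simp: diag_mat_def mat_diag_def)
  finally show ?thesis .
qed

lemma card_below_second_smallest:
  fixes ds :: "'a :: linorder list"
  shows "card {i. i < length ds \<and> ds ! i < sort ds ! 1} \<le> 1"
proof -
  let ?s = "sort ds" and ?P = "\<lambda>x. x < sort ds ! 1"
  have "card {i. i < length ds \<and> ?P (ds ! i)} = length (filter ?P ds)"
    by (simp add: length_filter_conv_card)
  also have "\<dots> = length (filter ?P ?s)" by (simp add: filter_sort)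
  also have "\<dots> = card {j. j < length ?s \<and> ?P (?s ! j)}" by (simp add: length_filter_conv_card)
  also have "\<dots> \<le> card {0::nat}"
  proof (rule card_mono)
    show "{j. j < length ?s \<and> ?P (?s ! j)} \<subseteq> {0}"
    proof (rule subsetI, rule ccontr)
      fix j assume j: "j \<in> {j. j < length ?s \<and> ?P (?s ! j)}" and "j \<notin> {0}"
      hence "?s ! 1 \<le> ?s ! j" by (intro sorted_nth_mono) auto
      with j show False by auto
    qed
  qed simp
  finally show ?thesis by simp
qed

lemma second_smallest_weighted_sum:
  fixes d z w :: "nat \<Rightarrow> real"
  assumes d0: "\<And>i. i < n \<Longrightarrow> d i \<ge> 0" and dw: "\<And>i. i < n \<Longrightarrow> d i * w i = 0"
    and i0: "i0 < n" "w i0 \<noteq> 0" and zw: "(\<Sum>i<n. z i * w i) = 0"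
  shows "sort (map d [0..<n]) ! 1 * (\<Sum>i<n. (z i)\<^sup>2) \<le> (\<Sum>i<n. d i * (z i)\<^sup>2)"
proof (cases "sort (map d [0..<n]) ! 1 \<le> 0")
  case True
  hence "sort (map d [0..<n]) ! 1 * (\<Sum>i<n. (z i)\<^sup>2) \<le> 0"
    by (simp add: mult_nonpos_nonneg sum_nonneg)
  also have "\<dots> \<le> (\<Sum>i<n. d i * (z i)\<^sup>2)" using d0 by (intro sum_nonneg) simp
  finally show ?thesis .
next
  case False
  \<comment> \<open>since \<open>d i0 = 0\<close>, all other weights are \<open>\<ge> \<alpha>\<close>; as \<open>\<alpha> > 0\<close>, \<open>w\<close> vanishes off \<open>i0\<close>,
    so orthogonality forces \<open>z i0 = 0\<close>\<close>
  define \<alpha> where "\<alpha> = sort (map d [0..<n]) ! 1"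
  have \<alpha>: "\<alpha> > 0" using False unfolding \<alpha>_def by simp
  have d_i0: "d i0 = 0" using dw[OF i0(1)] i0(2) by simp
  have big: "d j \<ge> \<alpha>" if j: "j < n" "j \<noteq> i0" for j
  proof (rule ccontr)
    assume "\<not> ?thesis"
    hence "{i0, j} \<subseteq> {i. i < length (map d [0..<n]) \<and> map d [0..<n] ! i < \<alpha>}"
      using j i0 d_i0 \<alpha> by auto
    hence "card {i0, j} \<le> card {i. i < length (map d [0..<n]) \<and> map d [0..<n] ! i < \<alpha>}"
      by (intro card_mono) auto
    also have "\<dots> \<le> 1" unfolding \<alpha>_def by (rule card_below_second_smallest)
    finally show False using j by simp
  qed
  have w: "w j = 0" if "j < n" "j \<noteq> i0" for j
    using dw[OF that(1)] big[OF that] \<alpha> by auto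
  have "(\<Sum>i<n. z i * w i) = (\<Sum>i<n. if i = i0 then z i0 * w i0 else 0)"
    by (rule sum.cong) (auto simp: w)
  hence "z i0 = 0" using zw i0 by simp
  hence "\<alpha> * (z i)\<^sup>2 \<le> d i * (z i)\<^sup>2" if "i < n" for i
    using big[OF that] by (cases "i = i0") (auto intro: mult_right_mono)
  hence "(\<Sum>i<n. \<alpha> * (z i)\<^sup>2) \<le> (\<Sum>i<n. d i * (z i)\<^sup>2)" by (intro sum_mono) auto
  thus ?thesis unfolding \<alpha>_def by (simp add: sum_distrib_left)
qed


lemma mat_diag_mult_vec:
  assumes "x \<in> carrier_vec n"
  shows "mat_diag n d *\<^sub>v x = Matrix.vec n (\<lambda>i. d i * (x $ i :: 'a :: comm_semiring_1))"
proof (rule eq_vecI)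
  fix i assume "i < dim_vec (Matrix.vec n (\<lambda>i. d i * x $ i))"
  hence i: "i < n" by simp
  have "(mat_diag n d *\<^sub>v x) $ i = (\<Sum>k = 0..<n. (if i = k then d k else 0) * x $ k)"
    using assms i by (simp add: mat_diag_def scalar_prod_def)
  also have "\<dots> = (\<Sum>k = 0..<n. if k = i then d i * x $ i else 0)" by (rule sum.cong) auto
  finally show "(mat_diag n d *\<^sub>v x) $ i = Matrix.vec n (\<lambda>i. d i * x $ i) $ i" using i by simp
qed (simp add: mat_diag_def)

lemma orthogonal_transpose_sprod:
  fixes Q :: "'a :: field mat"
  assumes Q: "Q \<in> carrier_mat n n" and QQ: "transpose_mat Q * Q = 1\<^sub>m n"
    and x: "x \<in> carrier_vec n" and y: "y \<in> carrier_vec n"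
  shows "(transpose_mat Q *\<^sub>v x) \<bullet> (transpose_mat Q *\<^sub>v y) = x \<bullet> y"
proof -
  have "Q *\<^sub>v (transpose_mat Q *\<^sub>v y) = y"
    using Q y orthogonal_mult_transpose[OF Q QQ] by (simp flip: assoc_mult_mat_vec)
  thus ?thesis using transpose_vec_mult_scalar[OF Q _ x, of "transpose_mat Q *\<^sub>v y"] Q y by simp
qed

lemma orthogonal_diag_mult_vec:
  fixes Q :: "'a :: field mat"
  assumes Q: "Q \<in> carrier_mat n n" and QQ: "transpose_mat Q * Q = 1\<^sub>m n"
    and x: "x \<in> carrier_vec n"
  shows "Q * mat_diag n d * transpose_mat Q *\<^sub>v x = Q *\<^sub>v (mat_diag n d *\<^sub>v (transpose_mat Q *\<^sub>v x))"
    and "transpose_mat Q *\<^sub>v (Q * mat_diag n d * transpose_mat Q *\<^sub>v x)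
           = mat_diag n d *\<^sub>v (transpose_mat Q *\<^sub>v x)"
proof -
  have D: "mat_diag n d \<in> carrier_mat n n" by simp
  show *: "Q * mat_diag n d * transpose_mat Q *\<^sub>v x = Q *\<^sub>v (mat_diag n d *\<^sub>v (transpose_mat Q *\<^sub>v x))"
    using Q D x by (simp add: assoc_mult_mat_vec[of _ n n _ n])
  show "transpose_mat Q *\<^sub>v (Q * mat_diag n d * transpose_mat Q *\<^sub>v x)
           = mat_diag n d *\<^sub>v (transpose_mat Q *\<^sub>v x)"
  proof -
    have "transpose_mat Q *\<^sub>v x \<in> carrier_vec n" using Q x by simp
    hence u: "mat_diag n d *\<^sub>v (transpose_mat Q *\<^sub>v x) \<in> carrier_vec n"
      by (rule mult_mat_vec_carrier[OF mat_diag_dim])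
    show ?thesis unfolding * using assoc_mult_mat_vec[OF _ Q u, of "transpose_mat Q"] Q QQ u by simp
  qed
qed

lemma orthogonal_diag_quadratic_form:
  fixes Q :: "real mat"
  assumes Q: "Q \<in> carrier_mat n n" and QQ: "transpose_mat Q * Q = 1\<^sub>m n"
    and x: "x \<in> carrier_vec n"
  shows "x \<bullet> (Q * mat_diag n d * transpose_mat Q *\<^sub>v x)
           = (\<Sum>i<n. d i * ((transpose_mat Q *\<^sub>v x) $ i)\<^sup>2)"
proof -
  let ?z = "transpose_mat Q *\<^sub>v x"
  have z: "?z \<in> carrier_vec n" using Q x by simp
  have "x \<bullet> (Q * mat_diag n d * transpose_mat Q *\<^sub>v x) = ?z \<bullet> (mat_diag n d *\<^sub>v ?z)"
    unfolding orthogonal_diag_mult_vec(1)[OF Q QQ x]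
    by (rule transpose_vec_mult_scalar[OF Q mult_mat_vec_carrier[OF mat_diag_dim z] x, symmetric])
  also have "\<dots> = (\<Sum>i<n. d i * (?z $ i)\<^sup>2)"
    using z by (simp add: mat_diag_mult_vec scalar_prod_def lessThan_atLeast0 power2_eq_square
        algebra_simps)
  finally show ?thesis .
qed

lemma orthogonal_diag_psd_nonneg:
  fixes Q :: "real mat"
  assumes Q: "Q \<in> carrier_mat n n" and QQ: "transpose_mat Q * Q = 1\<^sub>m n"
    and psd: "\<And>x. x \<in> carrier_vec n \<Longrightarrow> x \<bullet> (Q * mat_diag n d * transpose_mat Q *\<^sub>v x) \<ge> 0"
    and i: "i < n"
  shows "d i \<ge> 0"
proof -
  have "transpose_mat Q *\<^sub>v (Q *\<^sub>v unit_vec n i) = unit_vec n i"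
    using Q QQ by (simp flip: assoc_mult_mat_vec)
  moreover have "(\<Sum>j<n. d j * (unit_vec n i $ j)\<^sup>2) = (\<Sum>j<n. if j = i then d i else 0)"
    by (rule sum.cong) (auto simp: unit_vec_def)
  ultimately have "(Q *\<^sub>v unit_vec n i) \<bullet> (Q * mat_diag n d * transpose_mat Q *\<^sub>v (Q *\<^sub>v unit_vec n i)) = d i"
    using Q i by (simp add: orthogonal_diag_quadratic_form[OF Q QQ])
  thus ?thesis using psd[of "Q *\<^sub>v unit_vec n i"] Q by simp
qed

lemma orthogonal_diag_kernel:
  fixes Q :: "real mat"
  assumes Q: "Q \<in> carrier_mat n n" and QQ: "transpose_mat Q * Q = 1\<^sub>m n"
    and v: "v \<in> carrier_vec n" "Q * mat_diag n d * transpose_mat Q *\<^sub>v v = 0\<^sub>v n"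
    and i: "i < n"
  shows "d i * (transpose_mat Q *\<^sub>v v) $ i = 0"
  using arg_cong[OF v(2), of "\<lambda>u. (transpose_mat Q *\<^sub>v u) $ i"] Q v(1) i
  unfolding orthogonal_diag_mult_vec(2)[OF Q QQ v(1)] by (simp add: mat_diag_mult_vec)

lemma second_eigenvalue_rayleigh:
  fixes L :: "real mat"
  assumes L: "L \<in> carrier_mat n n" and LT: "transpose_mat L = L"
    and psd: "\<And>x. x \<in> carrier_vec n \<Longrightarrow> x \<bullet> (L *\<^sub>v x) \<ge> 0"
    and v: "v \<in> carrier_vec n" "v \<noteq> 0\<^sub>v n" "L *\<^sub>v v = 0\<^sub>v n"
    and y: "y \<in> carrier_vec n" and yv: "y \<bullet> v = 0"
  shows "sorted_list_of_multiset (proots (char_poly L)) ! 1 * (y \<bullet> y) \<le> y \<bullet> (L *\<^sub>v y)"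
proof -
  obtain Q d where Q: "Q \<in> carrier_mat n n" and QQ: "transpose_mat Q * Q = 1\<^sub>m n"
    and L_eq: "L = Q * mat_diag n d * transpose_mat Q"
    using real_symmetric_spectral[OF L LT] by blast
  let ?Qt = "transpose_mat Q"
  define z where "z = ?Qt *\<^sub>v y"
  define w where "w = ?Qt *\<^sub>v v"
  have z: "z \<in> carrier_vec n" and w: "w \<in> carrier_vec n" using Q y v unfolding z_def w_def by auto
  have eig: "sorted_list_of_multiset (proots (char_poly L)) = sort (map d [0..<n])"
    unfolding L_eq char_poly_orthogonal_diag[OF Q QQ] proots_prod_list_linear_factors
    by (rule sorted_list_of_multiset_mset)
  have d0: "d i \<ge> 0" if "i < n" for i
    using orthogonal_diag_psd_nonneg[OF Q QQ psd[unfolded L_eq] that] .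
  have dw: "d i * w $ i = 0" if "i < n" for i
    unfolding w_def using orthogonal_diag_kernel[OF Q QQ v(1) v(3)[unfolded L_eq] that] .
  obtain i0 where i0: "i0 < n" "w $ i0 \<noteq> 0"
  proof -
    have "Q *\<^sub>v w = v" using Q QQ v(1) orthogonal_mult_transpose[OF Q QQ]
      unfolding w_def by (simp flip: assoc_mult_mat_vec)
    hence "w \<noteq> 0\<^sub>v n" using v(2) Q by auto
    thus ?thesis using that w by (metis carrier_vecD eq_vecI index_zero_vec(1,2))
  qed
  have "z \<bullet> w = y \<bullet> v"
    unfolding z_def w_def by (rule orthogonal_transpose_sprod[OF Q QQ y v(1)])
  hence zw: "(\<Sum>i<n. z $ i * w $ i) = 0" using yv w by (simp add: scalar_prod_def lessThan_atLeast0)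
  have "sorted_list_of_multiset (proots (char_poly L)) ! 1 * (\<Sum>i<n. (z $ i)\<^sup>2)
      \<le> (\<Sum>i<n. d i * (z $ i)\<^sup>2)"
    unfolding eig by (rule second_smallest_weighted_sum[of n d "\<lambda>i. w $ i", OF d0 dw i0 zw])
  moreover have "y \<bullet> y = z \<bullet> z"
    unfolding z_def by (rule orthogonal_transpose_sprod[OF Q QQ y y, symmetric])
  hence "y \<bullet> y = (\<Sum>i<n. (z $ i)\<^sup>2)"
    using z by (simp add: scalar_prod_def lessThan_atLeast0 power2_eq_square)
  ultimately show ?thesis
    unfolding L_eq orthogonal_diag_quadratic_form[OF Q QQ y] z_def by simp
qed


section \<open>The graph Laplacian\<close>

lemma incidence_mat_carrier: "incidence_mat n Es \<in> carrier_mat (length Es) n"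
  by (simp add: incidence_mat_def)

lemma laplacian_carrier: "laplacian n Es \<in> carrier_mat n n"
  unfolding laplacian_def using incidence_mat_carrier[of n Es] by simp

lemma laplacian_symmetric: "transpose_mat (laplacian n Es) = laplacian n Es"
  unfolding laplacian_def using incidence_mat_carrier[of n Es]
  by (simp add: transpose_mult[of _ n "length Es" _ n])

lemma simple_graph_edge:
  assumes "simple_graph n Es" "e \<in> set Es"
  shows "fst e < n" "snd e < n" "fst e \<noteq> snd e"
  using assms unfolding simple_graph_def by auto

lemma incidence_mat_mult_vec_index:
  assumes g: "simple_graph n Es" and x: "x \<in> carrier_vec n" and r: "r < length Es"
  shows "(incidence_mat n Es *\<^sub>v x) $ r = x $ fst (Es ! r) - x $ snd (Es ! r)"
proof -
  let ?a = "fst (Es ! r)" and ?b = "snd (Es ! r)"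
  have ab: "?a < n" "?b < n" "?a \<noteq> ?b" using simple_graph_edge[OF g] r by auto
  have "(incidence_mat n Es *\<^sub>v x) $ r =
     (\<Sum>k = 0..<n. (if k = ?a then 1 else if k = ?b then -1 else 0) * x $ k)"
    using r x by (simp add: incidence_mat_def scalar_prod_def)
  also have "\<dots> = (\<Sum>k = 0..<n. (if k = ?a then x $ k else 0) - (if k = ?b then x $ k else 0))"
    using ab by (intro sum.cong) auto
  also have "\<dots> = x $ ?a - x $ ?b" using ab by (simp add: sum_subtractf)
  finally show ?thesis .
qed

lemma laplacian_quadratic_form:
  assumes g: "simple_graph n Es" and x: "x \<in> carrier_vec n"
  shows "x \<bullet> (laplacian n Es *\<^sub>v x) = (\<Sum>(i,j)\<leftarrow>Es. (x $ i - x $ j)\<^sup>2)"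
proof -
  let ?A = "incidence_mat n Es"
  have A: "?A \<in> carrier_mat (length Es) n" by (rule incidence_mat_carrier)
  have "x \<bullet> (laplacian n Es *\<^sub>v x) = x \<bullet> (transpose_mat ?A *\<^sub>v (?A *\<^sub>v x))"
    unfolding laplacian_def using A x by (simp add: assoc_mult_mat_vec[of _ n "length Es" _ n])
  also have "\<dots> = (?A *\<^sub>v x) \<bullet> (?A *\<^sub>v x)"
    using transpose_vec_mult_scalar[of "transpose_mat ?A" n "length Es"] A x by simp
  also have "\<dots> = (\<Sum>r = 0..<length Es. (x $ fst (Es ! r) - x $ snd (Es ! r))\<^sup>2)"
    using A x incidence_mat_mult_vec_index[OF g x] by (simp add: scalar_prod_def power2_eq_square)
  also have "\<dots> = (\<Sum>(i,j)\<leftarrow>Es. (x $ i - x $ j)\<^sup>2)"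
    by (simp add: sum_list_sum_nth case_prod_beta)
  finally show ?thesis .
qed

lemma laplacian_mult_ones:
  assumes g: "simple_graph n Es"
  shows "laplacian n Es *\<^sub>v Matrix.vec n (\<lambda>_. 1) = 0\<^sub>v n"
proof -
  let ?A = "incidence_mat n Es" and ?one = "Matrix.vec n (\<lambda>_. 1::real)"
  have A: "?A \<in> carrier_mat (length Es) n" by (rule incidence_mat_carrier)
  have "?A *\<^sub>v ?one = 0\<^sub>v (length Es)"
    using incidence_mat_mult_vec_index[OF g] simple_graph_edge[OF g] A
    by (intro eq_vecI) auto
  hence "laplacian n Es *\<^sub>v ?one = transpose_mat ?A *\<^sub>v 0\<^sub>v (length Es)"
    unfolding laplacian_def using A by (simp add: assoc_mult_mat_vec[of _ n "length Es" _ n])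
  also have "\<dots> = 0\<^sub>v n" using A by (intro eq_vecI) auto
  finally show ?thesis .
qed

lemma alg_conn_rayleigh:
  assumes g: "simple_graph n Es" and n: "n > 0" and y0: "(\<Sum>i<n. y i) = 0"
  shows "alg_conn n Es * (\<Sum>i<n. (y i)\<^sup>2) \<le> (\<Sum>(i,j)\<leftarrow>Es. (y i - y j)\<^sup>2)"
proof -
  let ?y = "Matrix.vec n y" and ?one = "Matrix.vec n (\<lambda>_. 1 :: real)"
  have y: "?y \<in> carrier_vec n" by simp
  have "?one \<noteq> 0\<^sub>v n" using n by (metis index_vec index_zero_vec(1) zero_neq_one)
  moreover have "?y \<bullet> ?one = 0" using y0 by (simp add: scalar_prod_def lessThan_atLeast0)
  moreover have "x \<bullet> (laplacian n Es *\<^sub>v x) \<ge> 0" if "x \<in> carrier_vec n" for x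
    unfolding laplacian_quadratic_form[OF g that] by (intro sum_list_nonneg) auto
  ultimately have "alg_conn n Es * (?y \<bullet> ?y) \<le> ?y \<bullet> (laplacian n Es *\<^sub>v ?y)"
    unfolding alg_conn_def using laplacian_mult_ones[OF g]
    by (intro second_eigenvalue_rayleigh[OF laplacian_carrier laplacian_symmetric]) auto
  also have "?y \<bullet> (laplacian n Es *\<^sub>v ?y) = (\<Sum>(i,j)\<leftarrow>Es. (y i - y j)\<^sup>2)"
    unfolding laplacian_quadratic_form[OF g y]
    by (intro arg_cong[where f = sum_list] map_cong) (use g in \<open>auto simp: simple_graph_def\<close>)
  also have "?y \<bullet> ?y = (\<Sum>i<n. (y i)\<^sup>2)"
    by (simp add: scalar_prod_def lessThan_atLeast0 power2_eq_square)
  finally show ?thesis .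
qed


section \<open>The randomized averaging step\<close>

lemma sum_fun_upd2:
  fixes h :: "'a \<Rightarrow> 'b :: comm_ring" and i j n :: nat
  assumes "i < n" "j < n" "i \<noteq> j"
  shows "(\<Sum>k<n. h ((x(i := a, j := b)) k))
           = (\<Sum>k<n. h (x k)) + ((h a - h (x i)) + (h b - h (x j)))"
proof -
  have "(\<Sum>k<n. h ((x(i := a, j := b)) k) - h (x k))
      = (\<Sum>k<n. (if k = i then h a - h (x i) else 0) + (if k = j then h b - h (x j) else 0))"
    by (rule sum.cong) (use assms in auto)
  also have "\<dots> = (h a - h (x i)) + (h b - h (x j))"
    using assms by (simp add: sum.distrib)
  finally show ?thesis by (simp add: sum_subtractf algebra_simps)
qed

lemma upd_as_transfer:
  "upd Es x (i, j) = (let \<sigma> = (if x i < x j then step_size Es x else - step_size Es x)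
                      in x(i := x i + \<sigma>, j := x j - \<sigma>))"
  by (simp add: upd_def Let_def)

lemma upd_preserves_sum:
  assumes g: "simple_graph n Es" and e: "e \<in> set Es"
  shows "(\<Sum>k<n. upd Es x e k) = (\<Sum>k<n. x k)"
proof -
  obtain i j where ij: "e = (i, j)" by (cases e)
  hence "i < n" "j < n" "i \<noteq> j" using simple_graph_edge[OF g e] by auto
  thus ?thesis unfolding ij upd_as_transfer Let_def by (simp add: sum_fun_upd2[where h = id, simplified])
qed

lemma upd_sq_dev:
  assumes g: "simple_graph n Es" and e: "e \<in> set Es"
  shows "(\<Sum>k<n. (cb - upd Es x e k)\<^sup>2) = (\<Sum>k<n. (cb - x k)\<^sup>2)
           - 2 * step_size Es x * \<bar>x (fst e) - x (snd e)\<bar> + 2 * (step_size Es x)\<^sup>2"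
proof -
  obtain i j where ij: "e = (i, j)" by (cases e)
  hence ijn: "i < n" "j < n" "i \<noteq> j" using simple_graph_edge[OF g e] by auto
  define \<sigma> where "\<sigma> = (if x i < x j then step_size Es x else - step_size Es x)"
  have "(\<Sum>k<n. (cb - upd Es x e k)\<^sup>2) = (\<Sum>k<n. (cb - x k)\<^sup>2)
      + (((cb - (x i + \<sigma>))\<^sup>2 - (cb - x i)\<^sup>2) + ((cb - (x j - \<sigma>))\<^sup>2 - (cb - x j)\<^sup>2))"
    unfolding ij upd_as_transfer Let_def \<sigma>_def[symmetric]
    by (rule sum_fun_upd2[OF ijn, where h = "\<lambda>t. (cb - t)\<^sup>2"])
  moreover have "((cb - (x i + \<sigma>))\<^sup>2 - (cb - x i)\<^sup>2) + ((cb - (x j - \<sigma>))\<^sup>2 - (cb - x j)\<^sup>2)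
      = - 2 * step_size Es x * \<bar>x i - x j\<bar> + 2 * (step_size Es x)\<^sup>2"
    unfolding \<sigma>_def by (simp add: abs_if power2_eq_square algebra_simps)
  ultimately show ?thesis unfolding ij by simp
qed

lemma sum_edge_gaps:
  assumes "distinct Es" "Es \<noteq> []"
  shows "(\<Sum>e\<in>set Es. \<bar>x (fst e) - x (snd e)\<bar>) = 2 * real (length Es) * step_size Es x"
  using sum_list_distinct_conv_sum_set[OF assms(1), of "\<lambda>(i,j). \<bar>x i - x j\<bar>"] assms(2)
  by (simp add: step_size_def case_prod_beta)

lemma expected_sq_dev_step:
  assumes g: "simple_graph n Es" and ne: "Es \<noteq> []"
  shows "measure_pmf.expectation (map_pmf (upd Es x) (pmf_of_set (set Es))) (\<lambda>y. \<Sum>k<n. (cb - y k)\<^sup>2)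
     = (\<Sum>k<n. (cb - x k)\<^sup>2) - 2 * (step_size Es x)\<^sup>2"
proof -
  let ?l = "step_size Es x" and ?F = "\<Sum>k<n. (cb - x k)\<^sup>2" and ?m = "real (length Es)"
  have dist: "distinct Es" using g unfolding simple_graph_def by simp
  hence card: "card (set Es) = length Es" by (rule distinct_card)
  have "measure_pmf.expectation (map_pmf (upd Es x) (pmf_of_set (set Es))) (\<lambda>y. \<Sum>k<n. (cb - y k)\<^sup>2)
      = (\<Sum>e\<in>set Es. \<Sum>k<n. (cb - upd Es x e k)\<^sup>2) / ?m"
    using ne by (simp add: integral_map_pmf integral_pmf_of_set card)
  also have "(\<Sum>e\<in>set Es. \<Sum>k<n. (cb - upd Es x e k)\<^sup>2)
      = (\<Sum>e\<in>set Es. ?F - 2 * ?l * \<bar>x (fst e) - x (snd e)\<bar> + 2 * ?l\<^sup>2)"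
    using upd_sq_dev[OF g] by (intro sum.cong) auto
  also have "\<dots> = ?m * ?F - 2 * ?l * (2 * ?m * ?l) + ?m * 2 * ?l\<^sup>2"
    by (simp add: sum.distrib sum_subtractf sum_distrib_left[symmetric] card sum_edge_gaps[OF dist ne])
  also have "(?m * ?F - 2 * ?l * (2 * ?m * ?l) + ?m * 2 * ?l\<^sup>2) / ?m = ?F - 2 * ?l\<^sup>2"
    using ne by (simp add: field_simps power2_eq_square)
  finally show ?thesis .
qed

lemma sum_power2_le_power2_sum:
  fixes a :: "'a \<Rightarrow> real"
  assumes "finite S" "\<And>e. e \<in> S \<Longrightarrow> a e \<ge> 0"
  shows "(\<Sum>e\<in>S. (a e)\<^sup>2) \<le> (\<Sum>e\<in>S. a e)\<^sup>2"
  using assms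
proof (induction S rule: finite_induct)
  case (insert x F)
  have "0 \<le> a x * (\<Sum>e\<in>F. a e)" using insert.prems by (simp add: sum_nonneg)
  thus ?case using insert by (simp add: power2_eq_square algebra_simps)
qed simp


lemma alg_conn_le_twice_edges:
  assumes g: "simple_graph n Es" and n: "n \<ge> 2"
  shows "alg_conn n Es \<le> 2 * real (length Es)"
proof -
  define y where "y = (\<lambda>i::nat. (if i = 0 then 1 else 0) - (if i = 1 then 1 else 0 :: real))"
  have "(\<Sum>i<n. y i) = 0" using n by (simp add: y_def sum_subtractf)
  hence "alg_conn n Es * (\<Sum>i<n. (y i)\<^sup>2) \<le> (\<Sum>(i,j)\<leftarrow>Es. (y i - y j)\<^sup>2)"
    using alg_conn_rayleigh[OF g] n by simp
  moreover have "(\<Sum>i<n. (y i)\<^sup>2) = (\<Sum>i<n. (if i = 0 then 1 else 0) + (if i = 1 then 1 else 0 :: real))"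
    by (intro sum.cong) (auto simp: y_def)
  moreover have "(y i - y j)\<^sup>2 \<le> 4" for i j
    by (auto simp: y_def power2_eq_square)
  hence "(\<Sum>(i,j)\<leftarrow>Es. (y i - y j)\<^sup>2) \<le> (\<Sum>_\<leftarrow>Es. 4)"
    by (intro sum_list_mono) auto
  ultimately show ?thesis using n by (simp add: sum.distrib sum_list_triv)
qed

lemma expected_sq_dev_contraction:
  assumes g: "simple_graph n Es" and n: "n \<ge> 2" and ne: "Es \<noteq> []"
    and mean: "(\<Sum>i<n. x i) = real n * cb"
  shows "measure_pmf.expectation (map_pmf (upd Es x) (pmf_of_set (set Es))) (\<lambda>y. \<Sum>k<n. (cb - y k)\<^sup>2)
     \<le> (1 - alg_conn n Es / (2 * (real (length Es))\<^sup>2)) * (\<Sum>k<n. (cb - x k)\<^sup>2)"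
proof -
  let ?l = "step_size Es x" and ?F = "\<Sum>k<n. (cb - x k)\<^sup>2" and ?m = "real (length Es)"
  have dist: "distinct Es" using g unfolding simple_graph_def by simp
  have "(\<Sum>i<n. x i - cb) = 0" using mean by (simp add: sum_subtractf)
  hence "alg_conn n Es * (\<Sum>i<n. (x i - cb)\<^sup>2) \<le> (\<Sum>(i,j)\<leftarrow>Es. ((x i - cb) - (x j - cb))\<^sup>2)"
    using alg_conn_rayleigh[OF g, of "\<lambda>i. x i - cb"] n by simp
  also have "\<dots> = (\<Sum>e\<in>set Es. \<bar>x (fst e) - x (snd e)\<bar>\<^sup>2)"
    using sum_list_distinct_conv_sum_set[OF dist, of "\<lambda>(i,j). ((x i - cb) - (x j - cb))\<^sup>2"]
    by (simp add: case_prod_beta)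
  also have "\<dots> \<le> (\<Sum>e\<in>set Es. \<bar>x (fst e) - x (snd e)\<bar>)\<^sup>2"
    by (rule sum_power2_le_power2_sum) auto
  also have "\<dots> = 4 * ?m\<^sup>2 * ?l\<^sup>2"
    unfolding sum_edge_gaps[OF dist ne] by (simp add: power2_eq_square)
  finally have "alg_conn n Es * ?F \<le> 4 * ?m\<^sup>2 * ?l\<^sup>2" by (simp add: power2_commute)
  hence "alg_conn n Es / (2 * ?m\<^sup>2) * ?F \<le> 2 * ?l\<^sup>2"
    using ne by (simp add: field_simps power2_eq_square)
  thus ?thesis unfolding expected_sq_dev_step[OF g ne] by (simp add: algebra_simps)
qed

lemma iterate_finite_support:
  assumes "Es \<noteq> []"
  shows "finite (set_pmf (iterate Es c t))"
  using assms by (induction t) (auto simp: set_bind_pmf)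

lemma iterate_preserves_sum:
  assumes g: "simple_graph n Es" and ne: "Es \<noteq> []" and x: "x \<in> set_pmf (iterate Es c t)"
  shows "(\<Sum>i<n. x i) = (\<Sum>i<n. c i)"
  using x by (induction t arbitrary: x) (use ne upd_preserves_sum[OF g] in \<open>auto simp: set_bind_pmf\<close>)

lemma expectation_bind_pmf_le:
  fixes p :: "'a pmf" and K :: "'a \<Rightarrow> 'b pmf" and f :: "'b \<Rightarrow> real"
  assumes fin: "finite (set_pmf p)" and finK: "\<And>x. x \<in> set_pmf p \<Longrightarrow> finite (set_pmf (K x))"
    and le: "\<And>x. x \<in> set_pmf p \<Longrightarrow> measure_pmf.expectation (K x) f \<le> \<rho> * g x"
  shows "measure_pmf.expectation (p \<bind> K) f \<le> \<rho> * measure_pmf.expectation p g"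
proof -
  have "measure_pmf.expectation (p \<bind> K) f = (\<Sum>a\<in>set_pmf p. pmf p a *\<^sub>R measure_pmf.expectation (K a) f)"
    by (rule pmf_expectation_bind) (use fin finK in auto)
  also have "\<dots> \<le> (\<Sum>a\<in>set_pmf p. pmf p a * (\<rho> * g a))"
    using le by (auto intro!: sum_mono mult_left_mono)
  also have "\<dots> = \<rho> * measure_pmf.expectation p g"
    using integral_measure_pmf_real[OF fin, of p g]
    by (simp add: sum_distrib_left algebra_simps)
  finally show ?thesis .
qed

lemma graph_connected_edges_nonempty:
  assumes "graph_connected n Es" and "n \<ge> 2"
  shows "Es \<noteq> []"
proof
  assume "Es = []"
  hence "\<forall>i<n. \<forall>j<n. i = j" using assms(1) unfolding graph_connected_def by simp
  from this[rule_format, of 0 1] assms(2) show False by simp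
qed

lemma contraction_factor_nonneg:
  assumes g: "simple_graph n Es" and n: "n \<ge> 2" and ne: "Es \<noteq> []"
  shows "1 - alg_conn n Es / (2 * (real (length Es))\<^sup>2) \<ge> 0"
proof -
  have "1 \<le> real (length Es)" using ne by (cases Es) auto
  from mult_right_mono[OF this, of "real (length Es)"]
  have "2 * real (length Es) \<le> 2 * (real (length Es))\<^sup>2" by (simp add: power2_eq_square)
  hence "alg_conn n Es \<le> 2 * (real (length Es))\<^sup>2"
    using alg_conn_le_twice_edges[OF g n] by linarith
  thus ?thesis using ne by (simp add: field_simps)
qed

theorem mainTheorem19:
  fixes n :: nat and Es :: "(nat \<times> nat) list" and c :: "nat \<Rightarrow> real" and k :: nat
  assumes "n \<ge> 2"
    and "simple_graph n Es"
    and "graph_connected n Es"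
  defines "m \<equiv> length Es"
    and "cbar \<equiv> (\<Sum>i<n. c i) / real n"
  shows "measure_pmf.expectation (iterate Es c k) (\<lambda>x. \<Sum>i<n. (cbar - x i)\<^sup>2)
           \<le> (1 - alg_conn n Es / (2 * (real m)\<^sup>2)) ^ k * (\<Sum>i<n. (cbar - c i)\<^sup>2)"
proof -
  note n = \<open>n \<ge> 2\<close> and g = \<open>simple_graph n Es\<close>
  \<comment> \<open>connectivity is used only to guarantee an edge, i.e. \<open>m > 0\<close>\<close>
  have ne: "Es \<noteq> []" by (rule graph_connected_edges_nonempty[OF \<open>graph_connected n Es\<close> n])
  define f where "f = (\<lambda>x::nat \<Rightarrow> real. \<Sum>i<n. (cbar - x i)\<^sup>2)"
  define \<rho> where "\<rho> = 1 - alg_conn n Es / (2 * (real m)\<^sup>2)"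
  have "measure_pmf.expectation (iterate Es c t) f \<le> \<rho> ^ t * f c" for t
  proof (induction t)
    case (Suc t)
    have "measure_pmf.expectation (iterate Es c (Suc t)) f \<le> \<rho> * measure_pmf.expectation (iterate Es c t) f"
      unfolding iterate.simps
    proof (rule expectation_bind_pmf_le[OF iterate_finite_support[OF ne]])
      fix x assume "x \<in> set_pmf (iterate Es c t)"
      hence "(\<Sum>i<n. x i) = real n * cbar"
        using iterate_preserves_sum[OF g ne] n unfolding cbar_def by simp
      thus "measure_pmf.expectation (map_pmf (upd Es x) (pmf_of_set (set Es))) f \<le> \<rho> * f x"
        unfolding f_def \<rho>_def m_def by (rule expected_sq_dev_contraction[OF g n ne])
    qed (use ne in auto)
    also have "\<dots> \<le> \<rho> * (\<rho> ^ t * f c)"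
      using Suc contraction_factor_nonneg[OF g n ne] unfolding \<rho>_def m_def by (rule mult_left_mono)
    finally show ?case by (simp add: mult.assoc)
  qed simp
  thus ?thesis unfolding f_def \<rho>_def .
qed

end
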